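(* For all $\epsilon_1,\epsilon_2\ge0$ with $\epsilon_1+\sqrt{\epsilon_2}<1$ and any two channels $\mathcal{E},\mathcal{M}$ with the same input and output systems, $$D^{\epsilon_1}_H(\mathcal{E}\|\mathcal{M})\le D^{\epsilon_2}_{\max}(\mathcal{E}\|\mathcal{M})+\log\frac{1}{1-\epsilon_1-\sqrt{\epsilon_2}}.$$
   Context: Finite-dimensional Hilbert spaces, $\log$ base 2, channels are CPTP maps. For states: $F(\rho,\sigma)=\|\sqrt\rho\sqrt\sigma\|_1^2$; $D_{\max}(\rho\|\sigma)=\inf\{\lambda:\rho\le2^\lambda\sigma\}$; $D^\epsilon_H(\rho\|\sigma)=\sup\{-\log\mathrm{Tr}[P\sigma]:0\le P\le\mathbb{1},\mathrm{Tr}[P\rho]\ge1-\epsilon\}$. For channels: $F(\mathcal{E}_1,\mathcal{E}_2)=\min_\psi F((\mathrm{id}\otimes\mathcal{E}_1)(\psi),(\mathrm{id}\otimes\mathcal{E}_2)(\psi))$ over pure $\psi$ on reference $\otimes$ input; $D^\epsilon_H(\mathcal{E}\|\mathcal{M})=\sup_\psi D^\epsilon_H((\mathrm{id}\otimes\mathcal{E})(\psi)\|(\mathrm{id}\otimes\mathcal{M})(\psi))$; $D^\epsilon_{\max}(\mathcal{E}\|\mathcal{M})=\inf\{\sup_\psi D_{\max}((\mathrm{id}\otimes\mathcal{E}')(\psi)\|(\mathrm{id}\otimes\mathcal{M})(\psi)):\mathcal{E}'\text{ a channel with }F(\mathcal{E}',\mathcal{E})\ge1-\epsilon\}$. *)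

theory Defs
  imports "HOL-Analysis.Analysis" "Jordan_Normal_Form.Matrix"
begin

definition adj :: "complex mat \<Rightarrow> complex mat" where
  "adj A = mat (dim_col A) (dim_row A) (\<lambda>(i,j). cnj (A $$ (j,i)))"

definition tr :: "complex mat \<Rightarrow> complex" where
  "tr A = (\<Sum>i<dim_row A. A $$ (i,i))"

definition psd :: "nat \<Rightarrow> complex mat \<Rightarrow> bool" where
  "psd n A \<longleftrightarrow> A \<in> carrier_mat n n \<and>
     (\<forall>v \<in> carrier_vec n. let q = (\<Sum>i<n. \<Sum>j<n. cnj (v $ i) * A $$ (i,j) * v $ j)
                            in Im q = 0 \<and> Re q \<ge> 0)"

definition loewner_le :: "nat \<Rightarrow> complex mat \<Rightarrow> complex mat \<Rightarrow> bool" where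
  "loewner_le n A B \<longleftrightarrow> A \<in> carrier_mat n n \<and> B \<in> carrier_mat n n \<and> psd n (B - A)"

definition msqrt :: "complex mat \<Rightarrow> complex mat" where
  "msqrt A = (THE B. psd (dim_row A) B \<and> B * B = A)"

definition trace_norm :: "complex mat \<Rightarrow> real" where
  "trace_norm X = Re (tr (msqrt (adj X * X)))"

definition fidelity :: "complex mat \<Rightarrow> complex mat \<Rightarrow> real" where
  "fidelity \<rho> \<sigma> = (trace_norm (msqrt \<rho> * msqrt \<sigma>))\<^sup>2"

text \<open>Pure states on reference (dimension k) tensor input (dimension d); the reference
  index is the outer (most significant) index: basis vector (a,i) has index a*d+i.\<close>

definition pure_states :: "nat \<Rightarrow> nat \<Rightarrow> complex mat set" where
  "pure_states k d = {mat (k*d) (k*d) (\<lambda>(i,j). v $ i * cnj (v $ j)) | v.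
       v \<in> carrier_vec (k*d) \<and> (\<Sum>i<k*d. (cmod (v $ i))\<^sup>2) = 1}"

text \<open>(id_k \<otimes> E) applied to a (k*din) x (k*din) matrix: E acts on each block.\<close>

definition block :: "nat \<Rightarrow> complex mat \<Rightarrow> nat \<Rightarrow> nat \<Rightarrow> complex mat" where
  "block d X a b = mat d d (\<lambda>(i,j). X $$ (a*d+i, b*d+j))"

definition id_tensor :: "nat \<Rightarrow> nat \<Rightarrow> nat \<Rightarrow> (complex mat \<Rightarrow> complex mat) \<Rightarrow> complex mat \<Rightarrow> complex mat" where
  "id_tensor k din dout E X =
     mat (k*dout) (k*dout) (\<lambda>(r,c). E (block din X (r div dout) (c div dout)) $$ (r mod dout, c mod dout))"

definition channel :: "nat \<Rightarrow> nat \<Rightarrow> (complex mat \<Rightarrow> complex mat) \<Rightarrow> bool" where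
  "channel din dout E \<longleftrightarrow>
     (\<forall>X \<in> carrier_mat din din. E X \<in> carrier_mat dout dout) \<and>
     (\<forall>X \<in> carrier_mat din din. \<forall>Y \<in> carrier_mat din din. E (X + Y) = E X + E Y) \<and>
     (\<forall>X \<in> carrier_mat din din. \<forall>c. E (c \<cdot>\<^sub>m X) = c \<cdot>\<^sub>m E X) \<and>
     (\<forall>X \<in> carrier_mat din din. tr (E X) = tr X) \<and>
     (\<forall>k X. psd (k*din) X \<longrightarrow> psd (k*dout) (id_tensor k din dout E X))"

definition neglog2 :: "real \<Rightarrow> ereal" where
  "neglog2 t = (if t \<le> 0 then \<infinity> else ereal (- log 2 t))"

definition DH :: "real \<Rightarrow> nat \<Rightarrow> complex mat \<Rightarrow> complex mat \<Rightarrow> ereal" where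
  "DH \<epsilon> n \<rho> \<sigma> = Sup {neglog2 (Re (tr (P * \<sigma>))) | P.
       psd n P \<and> loewner_le n P (1\<^sub>m n) \<and> Re (tr (P * \<rho>)) \<ge> 1 - \<epsilon>}"

definition Dmax :: "nat \<Rightarrow> complex mat \<Rightarrow> complex mat \<Rightarrow> ereal" where
  "Dmax n \<rho> \<sigma> = Inf {ereal l | l. loewner_le n \<rho> (complex_of_real (2 powr l) \<cdot>\<^sub>m \<sigma>)}"

definition channel_fidelity :: "nat \<Rightarrow> nat \<Rightarrow> (complex mat \<Rightarrow> complex mat) \<Rightarrow> (complex mat \<Rightarrow> complex mat) \<Rightarrow> real" where
  "channel_fidelity din dout E1 E2 = Inf {fidelity (id_tensor k din dout E1 \<psi>) (id_tensor k din dout E2 \<psi>) | k \<psi>.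
       \<psi> \<in> pure_states k din}"

definition channel_DH :: "real \<Rightarrow> nat \<Rightarrow> nat \<Rightarrow> (complex mat \<Rightarrow> complex mat) \<Rightarrow> (complex mat \<Rightarrow> complex mat) \<Rightarrow> ereal" where
  "channel_DH \<epsilon> din dout E M = Sup {DH \<epsilon> (k*dout) (id_tensor k din dout E \<psi>) (id_tensor k din dout M \<psi>) | k \<psi>.
       \<psi> \<in> pure_states k din}"

definition channel_Dmax_smooth :: "real \<Rightarrow> nat \<Rightarrow> nat \<Rightarrow> (complex mat \<Rightarrow> complex mat) \<Rightarrow> (complex mat \<Rightarrow> complex mat) \<Rightarrow> ereal" where
  "channel_Dmax_smooth \<epsilon> din dout E M = Inf {Sup {Dmax (k*dout) (id_tensor k din dout E' \<psi>) (id_tensor k din dout M \<psi>) | k \<psi>.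
       \<psi> \<in> pure_states k din} | E'. channel din dout E' \<and> channel_fidelity din dout E' E \<ge> 1 - \<epsilon>}"

end

theory Submission
  imports Defs "Jordan_Normal_Form.Spectral_Radius"
begin

(* Fix an input psi and a channel E' with F(E', E) >= 1 - eps2, and let rho, rho', sigma be the
   outputs of E, E', M on psi, so that F(rho', rho) >= 1 - eps2. Measuring {P, 1 - P} does not
   decrease the fidelity, and for two-outcome distributions (p - q)^2 <= 1 - F; hence a test P
   with tr (P rho) >= 1 - eps1 has tr (P rho') >= c = 1 - eps1 - sqrt eps2. If rho' <= 2^l sigma,
   then tr (P sigma) >= 2^(-l) c, i.e. -log tr (P sigma) <= l + log (1 / c); it remains to take
   the supremum over P and psi and the infimum over l and E'.
   That measuring does not decrease the fidelity is the inequality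
   |sqrt rho' sqrt rho|_1 <= sqrt (tr (P rho') tr (P rho)) + sqrt (tr ((1 - P) rho') tr ((1 - P) rho)),
   which follows from the polar decomposition of sqrt rho' sqrt rho, the splitting
   sqrt rho' sqrt rho = sqrt rho' P sqrt rho + sqrt rho' (1 - P) sqrt rho, and the Cauchy-Schwarz
   inequality for the trace inner product. *)

section \<open>Adjoint, trace and positive semidefinite matrices\<close>

lemma index_mult_mat_sum:
  assumes "A \<in> carrier_mat n m" "B \<in> carrier_mat m p" "i < n" "j < p"
  shows "(A * B) $$ (i,j) = (\<Sum>k<m. A $$ (i,k) * B $$ (k,j))"
  using assms by (auto simp: scalar_prod_def lessThan_atLeast0 intro!: sum.cong)

lemma index_mult_mat_vec_sum:
  assumes "A \<in> carrier_mat n m" "v \<in> carrier_vec m" "i < n"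
  shows "(A *\<^sub>v v) $ i = (\<Sum>k<m. A $$ (i,k) * v $ k)"
  using assms by (auto simp: scalar_prod_def lessThan_atLeast0 intro!: sum.cong)

text \<open>Square instances of \<open>assoc_mult_mat\<close> and \<open>mult_carrier_mat\<close>: as simp rules their side
  conditions mention no dimension that is absent from the rewritten term.\<close>

lemma assoc_mult_mat_sq:
  "A \<in> carrier_mat n n \<Longrightarrow> B \<in> carrier_mat n n \<Longrightarrow> C \<in> carrier_mat n n \<Longrightarrow> A * B * C = A * (B * C)"
  by (rule assoc_mult_mat)

lemma mult_carrier_mat_sq: "A \<in> carrier_mat n n \<Longrightarrow> B \<in> carrier_mat n n \<Longrightarrow> A * B \<in> carrier_mat n n"
  by auto

lemma index_mat_diag [simp]: "i < n \<Longrightarrow> j < n \<Longrightarrow> mat_diag n f $$ (i,j) = (if i = j then f i else 0)"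
  by (simp add: mat_diag_def)

lemma dim_mat_diag [simp]: "dim_row (mat_diag n f) = n" "dim_col (mat_diag n f) = n"
  by (auto simp: mat_diag_def)

lemma adj_carrier [simp]: "A \<in> carrier_mat nr nc \<Longrightarrow> adj A \<in> carrier_mat nc nr"
  by (auto simp: adj_def)

lemma adj_dim [simp]: "dim_row (adj A) = dim_col A" "dim_col (adj A) = dim_row A"
  by (auto simp: adj_def)

lemma index_adj [simp]: "i < dim_col A \<Longrightarrow> j < dim_row A \<Longrightarrow> adj A $$ (i,j) = cnj (A $$ (j,i))"
  by (auto simp: adj_def)

lemma adj_adj [simp]: "adj (adj A) = A"
  by (rule eq_matI) auto

lemma adj_one [simp]: "adj (1\<^sub>m n) = 1\<^sub>m n"
  by (rule eq_matI) auto

lemma adj_mat_diag_real [simp]: "adj (mat_diag n (\<lambda>i. complex_of_real (d i))) = mat_diag n (\<lambda>i. complex_of_real (d i))"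
  by (rule eq_matI) auto

lemma adj_mult:
  assumes A: "A \<in> carrier_mat n m" and B: "B \<in> carrier_mat m p"
  shows "adj (A * B) = adj B * adj A"
proof (rule eq_matI)
  fix i j assume "i < dim_row (adj B * adj A)" "j < dim_col (adj B * adj A)"
  then have ij: "i < p" "j < n" using assms by auto
  have "adj (A * B) $$ (i, j) = cnj (\<Sum>k<m. A $$ (j,k) * B $$ (k,i))"
    using ij index_mult_mat_sum[OF A B, of j i] A B by simp
  also have "\<dots> = (\<Sum>k<m. adj B $$ (i,k) * adj A $$ (k,j))"
    using ij A B by (auto simp: mult.commute intro!: sum.cong)
  also have "\<dots> = (adj B * adj A) $$ (i, j)"
    using index_mult_mat_sum[of "adj B" p m "adj A" n i j] ij A B by simp
  finally show "adj (A * B) $$ (i, j) = (adj B * adj A) $$ (i, j)" .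
qed (use assms in auto)

lemma adj_conj:
  assumes "A \<in> carrier_mat n n" "W \<in> carrier_mat n m"
  shows "adj (adj W * A * W) = adj W * adj A * W"
proof -
  have "adj (adj W * A * W) = adj W * adj (adj W * A)" using assms by (intro adj_mult[of _ m n]) auto
  also have "adj (adj W * A) = adj A * W" using assms by (subst adj_mult[of _ m n _ n]) auto
  finally show ?thesis using assms by (simp add: assoc_mult_mat[of _ m n _ n _ m])
qed

lemma adj_minus: "A \<in> carrier_mat n m \<Longrightarrow> B \<in> carrier_mat n m \<Longrightarrow> adj (A - B) = adj A - adj B"
  by (rule eq_matI) auto

lemma tr_mult_sum:
  assumes A: "A \<in> carrier_mat n m" and B: "B \<in> carrier_mat m n"
  shows "tr (A * B) = (\<Sum>i<n. \<Sum>k<m. A $$ (i,k) * B $$ (k,i))"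
proof -
  have "tr (A * B) = (\<Sum>i<n. (A * B) $$ (i,i))" using A B by (simp add: tr_def)
  also have "\<dots> = (\<Sum>i<n. \<Sum>k<m. A $$ (i,k) * B $$ (k,i))"
    by (rule sum.cong[OF refl], rule index_mult_mat_sum[OF A B]) auto
  finally show ?thesis .
qed

lemma tr_mult_comm:
  assumes "A \<in> carrier_mat n m" "B \<in> carrier_mat m n"
  shows "tr (A * B) = tr (B * A)"
  using assms by (simp add: tr_mult_sum sum.swap[of _ "{..<m}"] mult.commute)

lemma tr_add: "A \<in> carrier_mat n n \<Longrightarrow> B \<in> carrier_mat n n \<Longrightarrow> tr (A + B) = tr A + tr B"
  by (simp add: tr_def sum.distrib)

lemma tr_minus: "A \<in> carrier_mat n n \<Longrightarrow> B \<in> carrier_mat n n \<Longrightarrow> tr (A - B) = tr A - tr B"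
  by (simp add: tr_def sum_subtractf)

lemma tr_smult: "A \<in> carrier_mat n n \<Longrightarrow> tr (c \<cdot>\<^sub>m A) = c * tr A"
  by (simp add: tr_def sum_distrib_left)

lemma tr_mat_diag: "tr (mat_diag n f) = (\<Sum>i<n. f i)"
  by (simp add: tr_def)

lemma cscalar_prod_sum:
  "v \<in> carrier_vec n \<Longrightarrow> w \<in> carrier_vec n \<Longrightarrow> v \<bullet>c w = (\<Sum>i<n. v $ i * cnj (w $ i))"
  by (auto simp: scalar_prod_def lessThan_atLeast0 intro!: sum.cong)

lemma cscalar_prod_adj:
  assumes C: "C \<in> carrier_mat n m" and x: "x \<in> carrier_vec n" and v: "v \<in> carrier_vec m"
  shows "(adj C *\<^sub>v x) \<bullet>c v = x \<bullet>c (C *\<^sub>v v)"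
proof -
  have col: "(adj C *\<^sub>v x) $ i = (\<Sum>k<n. cnj (C $$ (k,i)) * x $ k)" if "i < m" for i
    using index_mult_mat_vec_sum[OF adj_carrier[OF C] x that] C that by simp
  have "(adj C *\<^sub>v x) \<bullet>c v = (\<Sum>i<m. (adj C *\<^sub>v x) $ i * cnj (v $ i))"
    using mult_mat_vec_carrier[OF adj_carrier[OF C] x] v by (rule cscalar_prod_sum)
  also have "\<dots> = (\<Sum>i<m. \<Sum>k<n. cnj (C $$ (k,i)) * x $ k * cnj (v $ i))"
    by (rule sum.cong[OF refl]) (simp add: col sum_distrib_right del: index_mult_mat_vec)
  also have "\<dots> = (\<Sum>k<n. x $ k * cnj (\<Sum>i<m. C $$ (k,i) * v $ i))"
    by (subst sum.swap) (simp add: sum_distrib_left mult_ac)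
  also have "\<dots> = (\<Sum>k<n. x $ k * cnj ((C *\<^sub>v v) $ k))"
    by (rule sum.cong[OF refl]) (simp add: index_mult_mat_vec_sum[OF C v])
  also have "\<dots> = x \<bullet>c (C *\<^sub>v v)"
    using assms by (intro cscalar_prod_sum[symmetric]) auto
  finally show ?thesis .
qed

lemma cscalar_prod_smult:
  "x \<in> carrier_vec n \<Longrightarrow> y \<in> carrier_vec n \<Longrightarrow> (a \<cdot>\<^sub>v x) \<bullet>c (b \<cdot>\<^sub>v y) = a * cnj b * (x \<bullet>c y)"
  by (simp add: cscalar_prod_sum[of _ n] sum_distrib_left mult_ac)

lemma cscalar_prod_self:
  "v \<in> carrier_vec n \<Longrightarrow> v \<bullet>c v = of_real (\<Sum>i<n. (cmod (v $ i))\<^sup>2)"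
  by (simp add: cscalar_prod_sum[of _ n] complex_mult_cnj cmod_power2)

lemma cscalar_prod_self_eq_0:
  fixes v :: "complex vec"
  assumes "v \<in> carrier_vec n" "v \<bullet>c v = 0"
  shows "v = 0\<^sub>v n"
proof -
  have "(\<Sum>i<n. (cmod (v $ i))\<^sup>2) = 0" using assms cscalar_prod_self[of v n] by simp
  then have "\<forall>i<n. (cmod (v $ i))\<^sup>2 = 0" by (subst (asm) sum_nonneg_eq_0_iff) auto
  then show ?thesis using assms by (auto intro!: eq_vecI)
qed

lemma quadratic_form_cscalar_prod:
  assumes "A \<in> carrier_mat n n" "v \<in> carrier_vec n"
  shows "(\<Sum>i<n. \<Sum>j<n. cnj (v $ i) * A $$ (i,j) * v $ j) = (A *\<^sub>v v) \<bullet>c v"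
proof -
  have "(A *\<^sub>v v) \<bullet>c v = (\<Sum>i<n. (\<Sum>j<n. A $$ (i,j) * v $ j) * cnj (v $ i))"
    using assms by (auto simp: cscalar_prod_sum[of _ n] simp del: index_mult_mat_vec
        intro!: sum.cong index_mult_mat_vec_sum)
  then show ?thesis by (simp add: sum_distrib_right sum_distrib_left mult_ac)
qed

lemma psd_iff_cscalar_prod: "psd n A \<longleftrightarrow> A \<in> carrier_mat n n \<and>
   (\<forall>v \<in> carrier_vec n. Im ((A *\<^sub>v v) \<bullet>c v) = 0 \<and> Re ((A *\<^sub>v v) \<bullet>c v) \<ge> 0)"
proof (cases "A \<in> carrier_mat n n")
  case True
  then show ?thesis by (simp add: psd_def Let_def quadratic_form_cscalar_prod)
qed (simp add: psd_def)

lemma psdD: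
  "psd n A \<Longrightarrow> v \<in> carrier_vec n \<Longrightarrow> Im ((A *\<^sub>v v) \<bullet>c v) = 0 \<and> Re ((A *\<^sub>v v) \<bullet>c v) \<ge> 0"
  unfolding psd_iff_cscalar_prod by auto

lemma psd_carrier: "psd n A \<Longrightarrow> A \<in> carrier_mat n n"
  unfolding psd_def by auto

lemma psd_congruence:
  assumes "psd n A" "C \<in> carrier_mat n m"
  shows "psd m (adj C * A * C)"
  unfolding psd_iff_cscalar_prod
proof (intro conjI ballI)
  have A: "A \<in> carrier_mat n n" using assms psd_carrier by auto
  then show "adj C * A * C \<in> carrier_mat m m" using assms by auto
  fix v :: "complex vec" assume v: "v \<in> carrier_vec m"
  have "(adj C * A * C) *\<^sub>v v = (adj C * A) *\<^sub>v (C *\<^sub>v v)"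
    using A assms v by (intro assoc_mult_mat_vec[of _ m n _ m]) auto
  also have "\<dots> = adj C *\<^sub>v (A *\<^sub>v (C *\<^sub>v v))"
    using A assms v by (intro assoc_mult_mat_vec[of _ m n _ n]) auto
  finally have "(adj C * A * C) *\<^sub>v v = adj C *\<^sub>v (A *\<^sub>v (C *\<^sub>v v))" .
  then have "((adj C * A * C) *\<^sub>v v) \<bullet>c v = (A *\<^sub>v (C *\<^sub>v v)) \<bullet>c (C *\<^sub>v v)"
    using A assms v by (simp add: cscalar_prod_adj[of _ n m])
  then show "Im (((adj C * A * C) *\<^sub>v v) \<bullet>c v) = 0" "0 \<le> Re (((adj C * A * C) *\<^sub>v v) \<bullet>c v)"
    using psdD[OF assms(1), of "C *\<^sub>v v"] assms v by auto
qed

lemma quadratic_form_two_unit_vecs: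
  fixes c :: complex
  assumes A: "A \<in> carrier_mat n n" and a: "a < n" and b: "b < n"
  defines "v \<equiv> vec n (\<lambda>k. of_bool (k = a) + c * of_bool (k = b))"
  shows "(A *\<^sub>v v) \<bullet>c v = A $$ (a,a) + c * A $$ (a,b) + cnj c * A $$ (b,a) + cnj c * c * A $$ (b,b)"
proof -
  have "v \<in> carrier_vec n" unfolding v_def by simp
  then have "(A *\<^sub>v v) \<bullet>c v = (\<Sum>i<n. \<Sum>j<n. cnj (v $ i) * A $$ (i,j) * v $ j)"
    using quadratic_form_cscalar_prod[OF A] by simp
  also have "\<dots> = (\<Sum>i<n. \<Sum>j<n. of_bool (i = a) * (of_bool (j = a) * A $$ (i,j))
       + c * (of_bool (i = a) * (of_bool (j = b) * A $$ (i,j)))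
       + cnj c * (of_bool (i = b) * (of_bool (j = a) * A $$ (i,j)))
       + cnj c * c * (of_bool (i = b) * (of_bool (j = b) * A $$ (i,j))))"
    unfolding v_def by (intro sum.cong refl) (simp add: algebra_simps)
  also have "\<dots> = A $$ (a,a) + c * A $$ (a,b) + cnj c * A $$ (b,a) + cnj c * c * A $$ (b,b)"
    using a b by (simp add: sum.distrib sum_distrib_left[symmetric])
  finally show ?thesis .
qed

lemma psd_diag_nonneg:
  assumes "psd n A" "i < n"
  shows "Im (A $$ (i,i)) = 0 \<and> Re (A $$ (i,i)) \<ge> 0"
  using psdD[OF assms(1), of "vec n (\<lambda>k. of_bool (k = i) + 0 * of_bool (k = i))"]
    quadratic_form_two_unit_vecs[OF psd_carrier[OF assms(1)] assms(2) assms(2), of 0]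
  by simp

lemma psd_hermitian:
  assumes "psd n A"
  shows "adj A = A"
proof -
  have A: "A \<in> carrier_mat n n" using assms psd_carrier by auto
  have im: "Im (A $$ (a,a) + c * A $$ (a,b) + cnj c * A $$ (b,a) + cnj c * c * A $$ (b,b)) = 0"
    if "a < n" "b < n" for a b c
    using psdD[OF assms, of "vec n (\<lambda>k. of_bool (k = a) + c * of_bool (k = b))"]
      quadratic_form_two_unit_vecs[OF A that, of c] by simp
  show ?thesis
  proof (rule eq_matI)
    fix i j assume "i < dim_row A" "j < dim_col A"
    then have ij: "i < n" "j < n" using A by auto
    have "Im (A $$ (k,k)) = 0" if "k < n" for k using im[OF that that, of 0] by simp
    then have "Im (A $$ (i,j) + A $$ (j,i)) = 0" "Re (A $$ (i,j) - A $$ (j,i)) = 0"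
      using im[OF ij, of 1] im[OF ij, of \<i>] ij by (simp_all add: algebra_simps)
    then show "adj A $$ (i, j) = A $$ (i, j)" using ij A by (auto simp: complex_eq_iff)
  qed (use A in auto)
qed

lemma psd_mat_diag:
  assumes "\<And>i. i < n \<Longrightarrow> d i \<ge> 0"
  shows "psd n (mat_diag n (\<lambda>i. complex_of_real (d i)))"
  unfolding psd_def Let_def
proof (intro conjI ballI)
  fix v :: "complex vec"
  have "(\<Sum>i<n. \<Sum>j<n. cnj (v $ i) * mat_diag n (\<lambda>i. complex_of_real (d i)) $$ (i,j) * v $ j)
      = (\<Sum>i<n. cnj (v $ i) * complex_of_real (d i) * v $ i)"
    by (intro sum.cong refl) (simp add: if_distrib[of "\<lambda>x. _ * x * _"] cong: if_cong)
  also have "\<dots> = (\<Sum>i<n. complex_of_real (d i * (cmod (v $ i))\<^sup>2))"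
    by (intro sum.cong refl) (simp add: complex_mult_cnj cmod_power2 mult_ac)
  finally have eq: "(\<Sum>i<n. \<Sum>j<n. cnj (v $ i) * mat_diag n (\<lambda>i. complex_of_real (d i)) $$ (i,j) * v $ j)
      = complex_of_real (\<Sum>i<n. d i * (cmod (v $ i))\<^sup>2)" by simp
  show "Im (\<Sum>i<n. \<Sum>j<n. cnj (v $ i) * mat_diag n (\<lambda>i. complex_of_real (d i)) $$ (i,j) * v $ j) = 0"
    "Re (\<Sum>i<n. \<Sum>j<n. cnj (v $ i) * mat_diag n (\<lambda>i. complex_of_real (d i)) $$ (i,j) * v $ j) \<ge> 0"
    unfolding eq using assms by (auto intro!: sum_nonneg)
qed auto

lemma psd_gram: "X \<in> carrier_mat n m \<Longrightarrow> psd m (adj X * X)"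
  using psd_congruence[OF psd_mat_diag[of n "\<lambda>_. 1"], of X m] by simp

section \<open>Unitary matrices and the spectral theorem\<close>

definition unitary :: "nat \<Rightarrow> complex mat \<Rightarrow> bool" where
  "unitary n U \<longleftrightarrow> U \<in> carrier_mat n n \<and> adj U * U = 1\<^sub>m n \<and> U * adj U = 1\<^sub>m n"

lemma unitaryI:
  assumes U: "U \<in> carrier_mat n n" and "adj U * U = 1\<^sub>m n"
  shows "unitary n U"
  using mat_mult_left_right_inverse[OF adj_carrier[OF U] U assms(2)] assms unfolding unitary_def by auto

lemma unitaryD:
  assumes "unitary n U"
  shows "U \<in> carrier_mat n n" "adj U * U = 1\<^sub>m n" "U * adj U = 1\<^sub>m n"
  using assms unfolding unitary_def by auto

lemma unitary_adj: "unitary n U \<Longrightarrow> unitary n (adj U)"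
  unfolding unitary_def by auto

lemma unitary_cancel_left [simp]:
  assumes "unitary n U" "D \<in> carrier_mat n k"
  shows "adj U * (U * D) = D"
proof -
  note U = unitaryD[OF assms(1)]
  have "adj U * (U * D) = (adj U * U) * D" by (rule assoc_mult_mat[symmetric]) (use U assms(2) in auto)
  then show ?thesis using U assms(2) by simp
qed

lemma unitary_mult:
  assumes "unitary n U" "unitary n V"
  shows "unitary n (U * V)"
proof -
  note U = unitaryD[OF assms(1)] and V = unitaryD[OF assms(2)]
  have "adj (U * V) * (U * V) = 1\<^sub>m n"
    using U V assms by (simp add: adj_mult[of _ n n _ n] assoc_mult_mat[of _ n n _ n _ n])
  then show ?thesis using U V by (intro unitaryI) auto
qed

lemma unitary_conj_cancel:
  assumes "unitary n U" "D \<in> carrier_mat n n"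
  shows "adj U * (U * D * adj U) * U = D"
proof -
  note U = unitaryD[OF assms(1)]
  show ?thesis using U assms by (simp add: assoc_mult_mat[of _ n n _ n _ n])
qed

lemma tr_unitary_conj:
  assumes "unitary n U" "S \<in> carrier_mat n n"
  shows "tr (U * S * adj U) = tr S"
proof -
  note U = unitaryD[OF assms(1)]
  have "tr ((U * S) * adj U) = tr (adj U * (U * S))" using U assms(2) by (intro tr_mult_comm) auto
  then show ?thesis using assms by simp
qed

lemma unitary_col_cscalar_prod:
  assumes "unitary n U" "i < n" "j < n"
  shows "col U j \<bullet>c col U i = of_bool (i = j)"
proof -
  note U = unitaryD[OF assms(1)]
  have "col U j \<bullet>c col U i = (\<Sum>k<n. adj U $$ (i,k) * U $$ (k,j))"
    using U assms by (simp add: cscalar_prod_sum[of _ n] mult.commute)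
  also have "\<dots> = (adj U * U) $$ (i,j)" using index_mult_mat_sum[OF adj_carrier[OF U(1)] U(1)] assms by simp
  finally show ?thesis using U assms by simp
qed

definition normalize_vec :: "complex vec \<Rightarrow> complex vec" where
  "normalize_vec w = complex_of_real (1 / sqrt (Re (w \<bullet>c w))) \<cdot>\<^sub>v w"

lemma normalize_vec_carrier [simp]: "w \<in> carrier_vec n \<Longrightarrow> normalize_vec w \<in> carrier_vec n"
  by (simp add: normalize_vec_def)

lemma cscalar_prod_normalize_vec:
  "x \<in> carrier_vec n \<Longrightarrow> y \<in> carrier_vec n \<Longrightarrow>
   normalize_vec x \<bullet>c normalize_vec y = of_real (1 / sqrt (Re (x \<bullet>c x)) * (1 / sqrt (Re (y \<bullet>c y)))) * (x \<bullet>c y)"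
  unfolding normalize_vec_def by (subst cscalar_prod_smult[of _ n]) auto

lemma normalize_vec_self:
  fixes x :: "complex vec"
  assumes x: "x \<in> carrier_vec n" "x \<noteq> 0\<^sub>v n"
  shows "normalize_vec x \<bullet>c normalize_vec x = 1"
proof -
  define r where "r = (\<Sum>i<n. (cmod (x $ i))\<^sup>2)"
  have xx: "x \<bullet>c x = of_real r" using cscalar_prod_self[OF x(1)] unfolding r_def .
  have "r \<noteq> 0" using xx cscalar_prod_self_eq_0[OF x(1)] x(2) by auto
  moreover have "r \<ge> 0" unfolding r_def by (simp add: sum_nonneg)
  ultimately have "sqrt r * sqrt r = r" "r > 0" by auto
  then have "1 / sqrt r * (1 / sqrt r) * r = 1" by (simp add: field_simps)
  then show ?thesis using cscalar_prod_normalize_vec[OF x(1) x(1)] xx by (simp flip: of_real_mult)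
qed

lemma normalize_vec_unit: "x \<bullet>c x = 1 \<Longrightarrow> normalize_vec x = x"
  by (simp add: normalize_vec_def)

lemma unitary_mat_of_cols:
  assumes len: "length ws = n" and ws: "\<And>i. i < n \<Longrightarrow> ws ! i \<in> carrier_vec n"
    and orth: "\<And>i j. i < n \<Longrightarrow> j < n \<Longrightarrow> ws ! j \<bullet>c ws ! i = of_bool (i = j)"
  shows "unitary n (mat_of_cols n ws)"
proof (rule unitaryI)
  let ?W = "mat_of_cols n ws"
  show W: "?W \<in> carrier_mat n n" using mat_of_cols_carrier(1)[of n ws] len by simp
  show "adj ?W * ?W = 1\<^sub>m n"
  proof (rule eq_matI)
    fix i j assume "i < dim_row (1\<^sub>m n)" "j < dim_col (1\<^sub>m n)"
    then have ij: "i < n" "j < n" by auto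
    have "(adj ?W * ?W) $$ (i,j) = (\<Sum>k<n. adj ?W $$ (i,k) * ?W $$ (k,j))"
      using index_mult_mat_sum[OF adj_carrier[OF W] W ij] .
    also have "\<dots> = (\<Sum>k<n. ws ! j $ k * cnj (ws ! i $ k))"
      using ij W len by (intro sum.cong refl) (simp add: mat_of_cols_index mult.commute)
    also have "\<dots> = 1\<^sub>m n $$ (i,j)" using orth[OF ij] ws ij by (simp add: cscalar_prod_sum[of _ n])
    finally show "(adj ?W * ?W) $$ (i,j) = 1\<^sub>m n $$ (i,j)" .
  qed (use W in auto)
qed

lemma unitary_with_first_col:
  assumes u: "u \<in> carrier_vec n" and uu: "u \<bullet>c u = 1"
  obtains W where "unitary n W" "col W 0 = u"
proof -
  have u0: "u \<noteq> 0\<^sub>v n" using uu u by auto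
  have n: "n > 0" using uu cscalar_prod_self[OF u] by (cases n) auto
  interpret cof_vec_space n "TYPE(complex)" .
  define b where "b = basis_completion u"
  have b: "set b \<subseteq> carrier_vec n" "distinct b" "\<not> lin_dep (set b)" "length b = n" "hd b = u"
    using basis_completion[OF u u0] unfolding b_def by auto
  obtain bs where bs: "b = u # bs" using b(4,5) n by (cases b) auto
  define gs where "gs = gram_schmidt n b"
  have gs: "corthogonal gs" "set gs \<subseteq> carrier_vec n" "length gs = n"
    using gram_schmidt_result[OF b(1-3) gs_def] b(4) by auto
  have gs_i: "gs ! i \<in> carrier_vec n" if "i < n" for i using gs that by (auto simp: set_conv_nth)
  define ws where "ws = map normalize_vec gs"
  have ws_i: "ws ! i = normalize_vec (gs ! i)" if "i < n" for i using that gs(3) by (simp add: ws_def)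
  have ws_orth: "ws ! j \<bullet>c ws ! i = of_bool (i = j)" if ij: "i < n" "j < n" for i j
  proof (cases "i = j")
    case True
    have "gs ! i \<bullet>c gs ! i \<noteq> 0" using gs(1,3) ij unfolding corthogonal_def by auto
    then have "gs ! i \<noteq> 0\<^sub>v n" by auto
    then show ?thesis using True normalize_vec_self[OF gs_i] ij ws_i by simp
  next
    case False
    then have "gs ! j \<bullet>c gs ! i = 0" using gs(1,3) ij unfolding corthogonal_def by auto
    then show ?thesis
      using False cscalar_prod_normalize_vec[OF gs_i gs_i] ij ws_i by simp
  qed
  have "gs ! 0 = u"
    using gram_schmidt_hd[OF u, of bs] hd_conv_nth[of gs] gs(3) n unfolding gs_def bs by force
  then have "col (mat_of_cols n ws) 0 = u"
    using col_mat_of_cols[of 0 ws n] ws_i[OF n] gs_i[OF n] normalize_vec_unit[OF uu] gs(3) n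
    by (simp add: ws_def)
  with unitary_mat_of_cols[of ws n] ws_i gs_i ws_orth gs(3) show ?thesis
    by (intro that) (auto simp: ws_def)
qed

lemma col_unitary_conj_eigenvector:
  assumes A: "A \<in> carrier_mat n n" and W: "unitary n W" and i: "i < n"
    and eig: "A *\<^sub>v col W i = e \<cdot>\<^sub>v col W i"
  shows "col (adj W * A * W) i = e \<cdot>\<^sub>v unit_vec n i"
proof -
  note Wc = unitaryD[OF W]
  have ci: "col W i \<in> carrier_vec n" by (rule col_carrier_vec[OF i Wc(1)])
  have "col (adj W * A * W) i = adj W *\<^sub>v col (A * W) i"
    using A Wc i by (simp add: assoc_mult_mat_sq[of _ n] col_mult2[of _ n n _ n])
  also have "col (A * W) i = A *\<^sub>v col W i" using A Wc i by (simp add: col_mult2[of _ n n _ n])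
  also have "adj W *\<^sub>v (A *\<^sub>v col W i) = e \<cdot>\<^sub>v (adj W *\<^sub>v col W i)"
    unfolding eig by (rule mult_mat_vec[OF adj_carrier[OF Wc(1)] ci])
  also have "adj W *\<^sub>v col W i = col (adj W * W) i"
    using col_mult2[OF adj_carrier[OF Wc(1)] Wc(1) i] by simp
  finally show ?thesis using Wc i by simp
qed

lemma hermitian_first_col_block:
  assumes A: "A \<in> carrier_mat (Suc m) (Suc m)" "adj A = A"
    and col0: "col A 0 = e \<cdot>\<^sub>v unit_vec (Suc m) 0"
  shows "\<exists>B. B \<in> carrier_mat m m \<and> adj B = B \<and> Im e = 0 \<and>
    A = four_block_mat (mat 1 1 (\<lambda>_. e)) (0\<^sub>m 1 m) (0\<^sub>m m 1) B"
proof -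
  let ?n = "Suc m"
  have A_i0: "A $$ (i, 0) = (if i = 0 then e else 0)" if "i < ?n" for i
    using arg_cong[OF col0, of "\<lambda>x. x $ i"] that A by auto
  have e: "cnj e = e" using arg_cong[OF A(2), of "\<lambda>X. X $$ (0, 0)"] A_i0[of 0] A(1) by simp
  have A_0j: "A $$ (0, j) = (if j = 0 then e else 0)" if "j < ?n" for j
    using arg_cong[OF A(2), of "\<lambda>X. X $$ (0, j)"] A(1) that A_i0[OF that] e by (cases "j = 0") auto
  define B where "B = mat m m (\<lambda>(i,j). A $$ (Suc i, Suc j))"
  have "B \<in> carrier_mat m m" unfolding B_def by simp
  moreover have "adj B = B"
  proof (rule eq_matI)
    fix i j assume "i < dim_row B" "j < dim_col B"
    then show "adj B $$ (i, j) = B $$ (i, j)"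
      using arg_cong[OF A(2), of "\<lambda>X. X $$ (Suc i, Suc j)"] A(1) unfolding B_def by simp
  qed (auto simp: B_def)
  moreover have "A = four_block_mat (mat 1 1 (\<lambda>_. e)) (0\<^sub>m 1 m) (0\<^sub>m m 1) B"
  proof (rule eq_matI)
    fix i j assume "i < dim_row (four_block_mat (mat 1 1 (\<lambda>_. e)) (0\<^sub>m 1 m) (0\<^sub>m m 1) B)"
      "j < dim_col (four_block_mat (mat 1 1 (\<lambda>_. e)) (0\<^sub>m 1 m) (0\<^sub>m m 1) B)"
    then have ij: "i < ?n" "j < ?n" unfolding B_def by auto
    show "A $$ (i, j) = four_block_mat (mat 1 1 (\<lambda>_. e)) (0\<^sub>m 1 m) (0\<^sub>m m 1) B $$ (i, j)"
    proof (cases "i = 0 \<or> j = 0")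
      case True
      then show ?thesis using ij A_i0 A_0j e by (auto simp: B_def)
    next
      case False
      then obtain i' j' where "i = Suc i'" "j = Suc j'" by (cases i; cases j) auto
      then show ?thesis using ij by (simp add: B_def)
    qed
  qed (use A in \<open>auto simp: B_def\<close>)
  moreover have "Im e = 0" using e by (simp add: complex_eq_iff)
  ultimately show ?thesis by blast
qed

lemma unitary_block_diag:
  assumes U: "unitary m U"
  defines "V \<equiv> four_block_mat (1\<^sub>m 1) (0\<^sub>m 1 m) (0\<^sub>m m 1) U"
  shows "unitary (Suc m) V"
    and "D \<in> carrier_mat m m \<Longrightarrow> V * four_block_mat (mat 1 1 (\<lambda>_. e)) (0\<^sub>m 1 m) (0\<^sub>m m 1) D * adj V
       = four_block_mat (mat 1 1 (\<lambda>_. e)) (0\<^sub>m 1 m) (0\<^sub>m m 1) (U * D * adj U)"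
proof -
  note Uc = unitaryD[OF U]
  have V: "V \<in> carrier_mat (Suc m) (Suc m)" unfolding V_def using Uc by auto
  have adjV: "adj V = four_block_mat (1\<^sub>m 1) (0\<^sub>m 1 m) (0\<^sub>m m 1) (adj U)"
    unfolding V_def by (rule eq_matI) (use Uc in auto)
  have "adj V * V = four_block_mat (1\<^sub>m 1) (0\<^sub>m 1 m) (0\<^sub>m m 1) (adj U * U)"
    unfolding adjV unfolding V_def by (subst mult_four_block_mat[of _ 1 1 _ m _ m _ _ 1 _ m]) (use Uc in auto)
  then show "unitary (Suc m) V" using Uc V by (intro unitaryI) auto
  show "V * four_block_mat (mat 1 1 (\<lambda>_. e)) (0\<^sub>m 1 m) (0\<^sub>m m 1) D * adj V
       = four_block_mat (mat 1 1 (\<lambda>_. e)) (0\<^sub>m 1 m) (0\<^sub>m m 1) (U * D * adj U)"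
    if D: "D \<in> carrier_mat m m"
  proof -
    have "U * D * adj U \<in> carrier_mat m m" using Uc D by auto
    then show ?thesis unfolding adjV unfolding V_def using Uc D
      by (simp add: mult_four_block_mat[of _ 1 1 _ m _ m _ _ 1 _ m])
  qed
qed

lemma four_block_mat_diag:
  "four_block_mat (mat 1 1 (\<lambda>_. c)) (0\<^sub>m 1 m) (0\<^sub>m m 1) (mat_diag m f)
     = mat_diag (Suc m) (\<lambda>i. if i = 0 then c else f (i - 1))"
  by (rule eq_matI) auto

theorem hermitian_spectral:
  assumes "A \<in> carrier_mat n n" "adj A = A"
  shows "\<exists>U d. unitary n U \<and> A = U * mat_diag n (\<lambda>i. complex_of_real (d i)) * adj U"
  using assms
proof (induction n arbitrary: A)
  case 0
  then show ?case by (intro exI[of _ "1\<^sub>m 0"]) (auto simp: unitary_def intro!: eq_matI)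
next
  case (Suc m A)
  obtain e where "e \<in> spectrum A" using spectrum_non_empty[OF Suc.prems(1)] by auto
  then obtain v where v: "v \<in> carrier_vec (Suc m)" "v \<noteq> 0\<^sub>v (Suc m)" "A *\<^sub>v v = e \<cdot>\<^sub>v v"
    using Suc.prems(1) unfolding spectrum_def eigenvalue_def eigenvector_def by auto
  obtain W where W: "unitary (Suc m) W" and W0: "col W 0 = normalize_vec v"
    using unitary_with_first_col[OF normalize_vec_carrier[OF v(1)] normalize_vec_self[OF v(1,2)]] .
  have "A *\<^sub>v col W 0 = e \<cdot>\<^sub>v col W 0"
    unfolding W0 normalize_vec_def mult_mat_vec[OF Suc.prems(1) v(1)] v(3) smult_smult_assoc
    by (simp add: mult.commute)
  then have "col (adj W * A * W) 0 = e \<cdot>\<^sub>v unit_vec (Suc m) 0"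
    using col_unitary_conj_eigenvector[OF Suc.prems(1) W] by simp
  moreover have "adj (adj W * A * W) = adj W * A * W"
    using adj_conj[OF Suc.prems(1) unitaryD(1)[OF W]] Suc.prems(2) by simp
  moreover have "adj W * A * W \<in> carrier_mat (Suc m) (Suc m)" using Suc.prems(1) unitaryD(1)[OF W] by auto
  ultimately obtain B where B: "B \<in> carrier_mat m m" "adj B = B" "Im e = 0"
    and WAW: "adj W * A * W = four_block_mat (mat 1 1 (\<lambda>_. e)) (0\<^sub>m 1 m) (0\<^sub>m m 1) B"
    using hermitian_first_col_block by blast
  obtain U d where U: "unitary m U" and Bd: "B = U * mat_diag m (\<lambda>i. complex_of_real (d i)) * adj U"
    using Suc.IH[OF B(1,2)] by blast
  define V where "V = four_block_mat (1\<^sub>m 1) (0\<^sub>m 1 m) (0\<^sub>m m 1) U"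
  define d' where "d' i = (if i = 0 then Re e else d (i - 1))" for i
  have V: "unitary (Suc m) V" using unitary_block_diag(1)[OF U] unfolding V_def by simp
  have "(\<lambda>i. complex_of_real (d' i)) = (\<lambda>i. if i = 0 then e else complex_of_real (d (i - 1)))"
    using B(3) by (auto simp: d'_def complex_eq_iff)
  then have "adj W * A * W = V * mat_diag (Suc m) (\<lambda>i. complex_of_real (d' i)) * adj V"
    unfolding WAW Bd V_def
    using unitary_block_diag(2)[OF U, of "mat_diag m (\<lambda>i. complex_of_real (d i))" e]
      four_block_mat_diag[of e m] by simp
  then have "A = W * (V * mat_diag (Suc m) (\<lambda>i. complex_of_real (d' i)) * adj V) * adj W"
    using unitary_conj_cancel[OF unitary_adj[OF W] Suc.prems(1)] by simp
  also have "\<dots> = (W * V) * mat_diag (Suc m) (\<lambda>i. complex_of_real (d' i)) * adj (W * V)"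
    using unitaryD[OF W] unitaryD[OF V]
    by (simp add: adj_mult[of _ "Suc m" "Suc m" _ "Suc m"] assoc_mult_mat_sq[of _ "Suc m"] mult_carrier_mat_sq)
  finally show ?case using unitary_mult[OF W V] by blast
qed

section \<open>Square roots of positive semidefinite matrices\<close>

lemma psd_unitary_conj:
  "psd n S \<Longrightarrow> unitary n U \<Longrightarrow> psd n (U * S * adj U)"
  using psd_congruence[of n S "adj U" n] unitaryD(1)[of n U] by simp

lemma psd_spectral:
  assumes "psd n A"
  shows "\<exists>U d. unitary n U \<and> (\<forall>i<n. d i \<ge> 0) \<and> A = U * mat_diag n (\<lambda>i. complex_of_real (d i)) * adj U"
proof -
  have A: "A \<in> carrier_mat n n" using assms psd_carrier by auto
  obtain U d where U: "unitary n U" and AD: "A = U * mat_diag n (\<lambda>i. complex_of_real (d i)) * adj U"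
    using hermitian_spectral[OF A psd_hermitian[OF assms]] by blast
  have "psd n (mat_diag n (\<lambda>i. complex_of_real (d i)))"
    using psd_congruence[OF assms unitaryD(1)[OF U]] unitary_conj_cancel[OF U, of "mat_diag n _"]
    unfolding AD by simp
  then have "\<forall>i<n. d i \<ge> 0" using psd_diag_nonneg by fastforce
  then show ?thesis using U AD by blast
qed

lemma psd_sqrt_spectral:
  assumes U: "unitary n U" and d: "\<forall>i<n. d i \<ge> 0"
  defines "B \<equiv> U * mat_diag n (\<lambda>i. complex_of_real (sqrt (d i))) * adj U"
  shows "psd n B" "B * B = U * mat_diag n (\<lambda>i. complex_of_real (d i)) * adj U"
proof -
  note Uc = unitaryD[OF U]
  define S where "S = mat_diag n (\<lambda>i. complex_of_real (sqrt (d i)))"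
  have S: "S \<in> carrier_mat n n" unfolding S_def by simp
  show "psd n B" unfolding B_def using d by (intro psd_unitary_conj psd_mat_diag U) auto
  have SS: "S * S = mat_diag n (\<lambda>i. complex_of_real (d i))"
    unfolding S_def using d by (intro eq_matI) (auto simp flip: of_real_mult)
  have "B * B = U * S * (adj U * U) * S * adj U"
    unfolding B_def S_def[symmetric] using Uc(1) S by (simp add: assoc_mult_mat_sq[of _ n] mult_carrier_mat_sq)
  also have "\<dots> = U * (S * S) * adj U" using Uc S by (simp add: assoc_mult_mat_sq[of _ n] mult_carrier_mat_sq)
  finally show "B * B = U * mat_diag n (\<lambda>i. complex_of_real (d i)) * adj U" unfolding SS .
qed

lemma psd_has_sqrt:
  assumes "psd n A"
  shows "\<exists>B. psd n B \<and> B * B = A"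
proof -
  obtain U d where "unitary n U" "\<forall>i<n. d i \<ge> 0" "A = U * mat_diag n (\<lambda>i. complex_of_real (d i)) * adj U"
    using psd_spectral[OF assms] by blast
  with psd_sqrt_spectral[of n U d] show ?thesis by blast
qed

lemma psd_quadratic_form_eq_0:
  assumes B: "psd n B" and v: "v \<in> carrier_vec n" and Bv: "(B *\<^sub>v v) \<bullet>c v = 0"
  shows "B *\<^sub>v v = 0\<^sub>v n"
proof -
  obtain R where R: "psd n R" "R * R = B" using psd_has_sqrt[OF B] by blast
  have Rc: "R \<in> carrier_mat n n" using psd_carrier[OF R(1)] .
  have "(R *\<^sub>v v) \<bullet>c (R *\<^sub>v v) = (adj R *\<^sub>v (R *\<^sub>v v)) \<bullet>c v"
    using cscalar_prod_adj[OF Rc _ v] Rc v by simp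
  also have "\<dots> = (B *\<^sub>v v) \<bullet>c v"
    unfolding R(2)[symmetric] using psd_hermitian[OF R(1)] Rc v by (simp add: assoc_mult_mat_vec[of _ n n _ n])
  finally have "R *\<^sub>v v = 0\<^sub>v n" using cscalar_prod_self_eq_0[of "R *\<^sub>v v" n] Bv Rc v by simp
  moreover have "B *\<^sub>v v = R *\<^sub>v (R *\<^sub>v v)"
    unfolding R(2)[symmetric] using Rc v by (simp add: assoc_mult_mat_vec[of _ n n _ n])
  ultimately show ?thesis using Rc by auto
qed

lemma hermitian_eq_zeroI:
  assumes X: "X \<in> carrier_mat n n" "adj X = X"
    and eig: "\<And>v l. v \<in> carrier_vec n \<Longrightarrow> v \<bullet>c v = 1 \<Longrightarrow> X *\<^sub>v v = complex_of_real l \<cdot>\<^sub>v v \<Longrightarrow> l = 0"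
  shows "X = 0\<^sub>m n n"
proof -
  obtain U d where U: "unitary n U" and XU: "X = U * mat_diag n (\<lambda>i. complex_of_real (d i)) * adj U"
    using hermitian_spectral[OF X] by blast
  note Uc = unitaryD[OF U]
  have XU': "X * U = U * mat_diag n (\<lambda>i. complex_of_real (d i))"
    unfolding XU using Uc U by (simp add: assoc_mult_mat_sq[of _ n] mult_carrier_mat_sq)
  have "d i = 0" if i: "i < n" for i
  proof (rule eig)
    show "col U i \<in> carrier_vec n" using Uc i by simp
    show "col U i \<bullet>c col U i = 1" using unitary_col_cscalar_prod[OF U i i] by simp
    have "X *\<^sub>v col U i = col (X * U) i" using X Uc i by (simp add: col_mult2[of _ n n _ n])
    also have "\<dots> = complex_of_real (d i) \<cdot>\<^sub>v col U i"
      unfolding XU' using Uc i by (intro eq_vecI) (auto simp: mat_diag_mult_right)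
    finally show "X *\<^sub>v col U i = complex_of_real (d i) \<cdot>\<^sub>v col U i" .
  qed
  then have "mat_diag n (\<lambda>i. complex_of_real (d i)) = 0\<^sub>m n n" by (intro eq_matI) auto
  then show ?thesis unfolding XU using Uc by simp
qed

lemma square_diff_mat:
  fixes B1 B2 :: "'a :: ring mat"
  assumes B1: "B1 \<in> carrier_mat n n" and B2: "B2 \<in> carrier_mat n n"
  shows "B1 * (B1 - B2) + (B1 - B2) * B2 = B1 * B1 - B2 * B2"
proof -
  have "B1 * (B1 - B2) = B1 * B1 - B1 * B2" by (rule mult_minus_distrib_mat[OF B1 B1 B2])
  moreover have "(B1 - B2) * B2 = B1 * B2 - B2 * B2" by (rule minus_mult_distrib_mat[OF B1 B2 B2])
  ultimately show ?thesis using B1 B2 by (intro eq_matI) auto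
qed

text \<open>\<open>X = B\<^sub>1 - B\<^sub>2\<close> satisfies \<open>B\<^sub>1 X + X B\<^sub>2 = 0\<close>; on \<open>v\<close> this gives
  \<open>l (\<langle>B\<^sub>1 v, v\<rangle> + \<langle>B\<^sub>2 v, v\<rangle>) = 0\<close>, so for \<open>l \<noteq> 0\<close> both nonnegative forms vanish,
  hence \<open>B\<^sub>1 v = B\<^sub>2 v = 0\<close> and \<open>X v = 0\<close>.\<close>

lemma psd_sqrt_diff_eigenvalue_eq_0:
  assumes p1: "psd n B1" and p2: "psd n B2" and eq: "B1 * B1 = B2 * B2"
    and v: "v \<in> carrier_vec n" "v \<bullet>c v = 1" and Xv: "(B1 - B2) *\<^sub>v v = complex_of_real l \<cdot>\<^sub>v v"
  shows "l = 0"
proof (rule ccontr)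
  assume l: "l \<noteq> 0"
  have B1: "B1 \<in> carrier_mat n n" and B2: "B2 \<in> carrier_mat n n" using p1 p2 psd_carrier by auto
  define X where "X = B1 - B2"
  have X: "X \<in> carrier_mat n n" unfolding X_def using B1 B2 by auto
  have hX: "adj X = X" unfolding X_def using adj_minus[OF B1 B2] psd_hermitian p1 p2 by simp
  have Y: "B1 * X + X * B2 = 0\<^sub>m n n"
    unfolding X_def square_diff_mat[OF B1 B2] eq using B2 by simp
  have X2: "(X *\<^sub>v (B2 *\<^sub>v v)) \<bullet>c v = complex_of_real l * ((B2 *\<^sub>v v) \<bullet>c v)"
  proof -
    have "(X *\<^sub>v (B2 *\<^sub>v v)) \<bullet>c v = (B2 *\<^sub>v v) \<bullet>c (X *\<^sub>v v)"
      using cscalar_prod_adj[OF X _ v(1), of "B2 *\<^sub>v v"] hX B2 v by simp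
    also have "\<dots> = (1 \<cdot>\<^sub>v (B2 *\<^sub>v v)) \<bullet>c (complex_of_real l \<cdot>\<^sub>v v)" unfolding X_def Xv by simp
    finally show ?thesis using cscalar_prod_smult[of "B2 *\<^sub>v v" n v 1] B2 v by simp
  qed
  have Yv: "(B1 * X + X * B2) *\<^sub>v v = complex_of_real l \<cdot>\<^sub>v (B1 *\<^sub>v v) + X *\<^sub>v (B2 *\<^sub>v v)"
    using B1 B2 X v Xv unfolding X_def[symmetric]
    by (simp add: add_mult_distrib_mat_vec[of _ n n] assoc_mult_mat_vec[of _ n n _ n] mult_mat_vec[of _ n n])
  have "0 = ((B1 * X + X * B2) *\<^sub>v v) \<bullet>c v"
    unfolding Y using v by (simp add: scalar_prod_def)
  also have "\<dots> = complex_of_real l * ((B1 *\<^sub>v v) \<bullet>c v + (B2 *\<^sub>v v) \<bullet>c v)"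
    unfolding Yv using B1 B2 X v X2 by (simp add: add_scalar_prod_distrib[of _ n] distrib_left)
  finally have "(B1 *\<^sub>v v) \<bullet>c v + (B2 *\<^sub>v v) \<bullet>c v = 0" using l by simp
  then have "(B1 *\<^sub>v v) \<bullet>c v = 0" "(B2 *\<^sub>v v) \<bullet>c v = 0"
    using psdD[OF p1 v(1)] psdD[OF p2 v(1)] by (auto simp: complex_eq_iff)
  then have "(B1 - B2) *\<^sub>v v = 0\<^sub>v n"
    using psd_quadratic_form_eq_0[OF p1 v(1)] psd_quadratic_form_eq_0[OF p2 v(1)] B1 B2 v
    by (simp add: minus_mult_distrib_mat_vec[of _ n n])
  then have "(complex_of_real l \<cdot>\<^sub>v v) \<bullet>c v = 0" using Xv v by (simp add: scalar_prod_def)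
  then show False using l v by simp
qed

lemma psd_sqrt_unique:
  assumes p1: "psd n B1" and p2: "psd n B2" and eq: "B1 * B1 = B2 * B2"
  shows "B1 = B2"
proof -
  have B1: "B1 \<in> carrier_mat n n" and B2: "B2 \<in> carrier_mat n n" using p1 p2 psd_carrier by auto
  have "B1 - B2 = 0\<^sub>m n n"
    using psd_sqrt_diff_eigenvalue_eq_0[OF p1 p2 eq] adj_minus[OF B1 B2] psd_hermitian[OF p1] psd_hermitian[OF p2] B1 B2
    by (intro hermitian_eq_zeroI) auto
  show ?thesis
  proof (rule eq_matI)
    fix i j assume "i < dim_row B2" "j < dim_col B2"
    then show "B1 $$ (i,j) = B2 $$ (i,j)"
      using arg_cong[OF \<open>B1 - B2 = 0\<^sub>m n n\<close>, of "\<lambda>M. M $$ (i,j)"] B1 B2 by simp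
  qed (use B1 B2 in auto)
qed

lemma msqrt_spec:
  assumes "psd n A"
  shows "psd n (msqrt A) \<and> msqrt A * msqrt A = A"
proof -
  have n: "dim_row A = n" using psd_carrier[OF assms] by auto
  have "\<exists>!B. psd (dim_row A) B \<and> B * B = A" unfolding n using psd_has_sqrt[OF assms] psd_sqrt_unique by blast
  then have "psd (dim_row A) (msqrt A) \<and> msqrt A * msqrt A = A" unfolding msqrt_def by (rule theI')
  then show ?thesis using n by simp
qed

lemma psd_msqrt: "psd n A \<Longrightarrow> psd n (msqrt A)"
  using msqrt_spec by blast

lemma msqrt_square: "psd n A \<Longrightarrow> msqrt A * msqrt A = A"
  using msqrt_spec by blast

lemma msqrt_unique:
  assumes "psd n A" "psd n B" "B * B = A"
  shows "msqrt A = B"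
  using psd_sqrt_unique[OF psd_msqrt[OF assms(1)] assms(2)] msqrt_square[OF assms(1)] assms(3) by simp

lemma msqrt_carrier: "psd n A \<Longrightarrow> msqrt A \<in> carrier_mat n n"
  using psd_msqrt psd_carrier by blast

lemma msqrt_hermitian: "psd n A \<Longrightarrow> adj (msqrt A) = msqrt A"
  using psd_msqrt psd_hermitian by blast

lemma msqrt_spectral:
  assumes "unitary n U" "\<forall>i<n. d i \<ge> 0"
  shows "msqrt (U * mat_diag n (\<lambda>i. complex_of_real (d i)) * adj U)
       = U * mat_diag n (\<lambda>i. complex_of_real (sqrt (d i))) * adj U"
  using msqrt_unique[OF _ psd_sqrt_spectral[OF assms]] psd_unitary_conj[OF psd_mat_diag assms(1)] assms(2)
  by simp

section \<open>Trace inequalities and the trace norm\<close>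

lemma psd_tr_nonneg:
  assumes "psd n A"
  shows "Im (tr A) = 0 \<and> Re (tr A) \<ge> 0"
proof -
  have "Im (tr A) = (\<Sum>i<n. Im (A $$ (i,i)))" "Re (tr A) = (\<Sum>i<n. Re (A $$ (i,i)))"
    using psd_carrier[OF assms] by (auto simp: tr_def)
  then show ?thesis using psd_diag_nonneg[OF assms] by (auto intro: sum_nonneg)
qed

lemma psd_tr_mult_nonneg:
  assumes "psd n P" "psd n Q"
  shows "Im (tr (P * Q)) = 0 \<and> Re (tr (P * Q)) \<ge> 0"
proof -
  define R where "R = msqrt P"
  have R: "R \<in> carrier_mat n n" "adj R = R" "R * R = P"
    unfolding R_def using msqrt_carrier msqrt_hermitian msqrt_square assms(1) by auto
  have Q: "Q \<in> carrier_mat n n" using assms(2) psd_carrier by auto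
  have "tr (P * Q) = tr (R * (R * Q))" using R(3) assoc_mult_mat_sq[OF R(1) R(1) Q] by simp
  also have "\<dots> = tr ((R * Q) * R)" using R Q by (intro tr_mult_comm) auto
  also have "(R * Q) * R = adj R * Q * R" using R by simp
  finally show ?thesis using psd_tr_nonneg[OF psd_congruence[OF assms(2) R(1)]] by simp
qed

lemma tr_adj_mult_cauchy_schwarz:
  assumes Y: "Y \<in> carrier_mat n m" and Z: "Z \<in> carrier_mat n m"
  shows "cmod (tr (adj Y * Z)) \<le> sqrt (Re (tr (adj Y * Y))) * sqrt (Re (tr (adj Z * Z)))"
proof -
  define I where "I = {..<m} \<times> {..<n}"
  have tr_sum: "tr (adj A * B) = (\<Sum>(i,k)\<in>I. cnj (A $$ (k,i)) * B $$ (k,i))"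
    if A: "A \<in> carrier_mat n m" and B: "B \<in> carrier_mat n m" for A B
  proof -
    have "tr (adj A * B) = (\<Sum>i<m. \<Sum>k<n. adj A $$ (i,k) * B $$ (k,i))"
      using tr_mult_sum[OF adj_carrier[OF A] B] .
    also have "\<dots> = (\<Sum>i<m. \<Sum>k<n. cnj (A $$ (k,i)) * B $$ (k,i))"
      using A by (intro sum.cong refl) auto
    finally show ?thesis unfolding I_def by (simp add: sum.cartesian_product)
  qed
  have tr_self: "Re (tr (adj A * A)) = (\<Sum>(i,k)\<in>I. (cmod (A $$ (k,i)))\<^sup>2)" if "A \<in> carrier_mat n m" for A
    unfolding tr_sum[OF that that] Re_sum by (intro sum.cong refl) (auto simp: cmod_power2 simp flip: power2_eq_square)
  have "cmod (tr (adj Y * Z)) \<le> (\<Sum>(i,k)\<in>I. cmod (Y $$ (k,i)) * cmod (Z $$ (k,i)))"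
    unfolding tr_sum[OF Y Z] by (rule order_trans[OF norm_sum]) (simp add: norm_mult case_prod_beta)
  also have "\<dots> \<le> L2_set (\<lambda>(i,k). cmod (Y $$ (k,i))) I * L2_set (\<lambda>(i,k). cmod (Z $$ (k,i))) I"
    using L2_set_mult_ineq[of "\<lambda>(i,k). cmod (Y $$ (k,i))" "\<lambda>(i,k). cmod (Z $$ (k,i))" I]
    by (simp add: case_prod_beta)
  finally show ?thesis unfolding L2_set_def tr_self[OF Y] tr_self[OF Z] by (simp add: case_prod_beta)
qed

lemma psd_one_minus_projection:
  assumes Pr: "Pr \<in> carrier_mat n n" "adj Pr = Pr" "Pr * Pr = Pr"
  shows "psd n (1\<^sub>m n - Pr)"
proof -
  define Z where "Z = 1\<^sub>m n - Pr"
  have Z: "Z \<in> carrier_mat n n" unfolding Z_def using Pr by auto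
  have hZ: "adj Z = Z" unfolding Z_def using adj_minus[OF one_carrier_mat Pr(1)] Pr(2) by simp
  have "Z * Pr = 1\<^sub>m n * Pr - Pr * Pr" unfolding Z_def using Pr by (subst minus_mult_distrib_mat[of _ n n]) auto
  then have "Z * Pr = 0\<^sub>m n n" using Pr by simp
  moreover have "Z * Z = Z * 1\<^sub>m n - Z * Pr"
    using mult_minus_distrib_mat[OF Z one_carrier_mat Pr(1)] unfolding Z_def by simp
  moreover have "Z - 0\<^sub>m n n = Z" using Z by (intro eq_matI) auto
  ultimately have "adj Z * Z = Z" using hZ Z by simp
  then show ?thesis using psd_gram[OF Z] unfolding Z_def by simp
qed

lemma tr_mult_projection_le:
  assumes M: "psd n M" and Pr: "Pr \<in> carrier_mat n n" "adj Pr = Pr" "Pr * Pr = Pr"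
  shows "Re (tr (M * Pr)) \<le> Re (tr M)"
proof -
  have Mc: "M \<in> carrier_mat n n" using M psd_carrier by auto
  have "Re (tr (M * (1\<^sub>m n - Pr))) \<ge> 0" using psd_tr_mult_nonneg[OF M psd_one_minus_projection[OF Pr]] by simp
  moreover have "M * (1\<^sub>m n - Pr) = M - M * Pr" using Mc Pr by (subst mult_minus_distrib_mat[of _ n n]) auto
  moreover have "tr (M - M * Pr) = tr M - tr (M * Pr)" using Mc Pr by (intro tr_minus) auto
  ultimately show ?thesis by simp
qed

text \<open>\<open>W W\<^sup>\<dagger>\<close> is a projection when \<open>W\<close> is a partial isometry.\<close>

lemma tr_partial_isometry_conj_le:
  assumes M: "psd n M" and W: "W \<in> carrier_mat n n" "W * (adj W * W) = W"
  shows "Re (tr (adj W * M * W)) \<le> Re (tr M)"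
proof -
  have Mc: "M \<in> carrier_mat n n" using M psd_carrier by auto
  define Pr where "Pr = W * adj W"
  have Pr: "Pr \<in> carrier_mat n n" unfolding Pr_def using W by auto
  have "adj Pr = Pr" unfolding Pr_def using adj_mult[OF W(1) adj_carrier[OF W(1)]] by simp
  moreover have "Pr * Pr = (W * (adj W * W)) * adj W"
    unfolding Pr_def using W(1) by (simp add: assoc_mult_mat_sq[of _ n] mult_carrier_mat_sq)
  then have "Pr * Pr = Pr" unfolding Pr_def using W(2) by simp
  moreover have "tr (adj W * M * W) = tr (M * Pr)"
    unfolding Pr_def using W Mc
    by (simp add: assoc_mult_mat_sq[of _ n] tr_mult_comm[of "adj W" n n])
  ultimately show ?thesis using tr_mult_projection_le[OF M Pr] \<open>Pr * Pr = Pr\<close> by simp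
qed

lemma trace_norm_nonneg: "X \<in> carrier_mat n m \<Longrightarrow> trace_norm X \<ge> 0"
  unfolding trace_norm_def using psd_tr_nonneg[OF psd_msqrt[OF psd_gram]] by blast

text \<open>Polar decomposition: with \<open>X\<^sup>\<dagger> X = V D V\<^sup>\<dagger>\<close>, the partial isometry \<open>W = X V D\<^sup>-\<^sup>1\<^sup>/\<^sup>2\<close>
  (pseudo-inverse on the kernel of \<open>D\<close>) gives \<open>W\<^sup>\<dagger> X V = D\<^sup>1\<^sup>/\<^sup>2\<close>.\<close>

lemma trace_norm_polar:
  assumes X: "X \<in> carrier_mat n n"
  obtains W V where "W \<in> carrier_mat n n" "W * (adj W * W) = W" "unitary n V"
    "tr (adj W * X * V) = of_real (trace_norm X)"
proof -
  have G: "psd n (adj X * X)" using psd_gram[OF X] .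
  obtain V d where V: "unitary n V" and d: "\<forall>i<n. d i \<ge> 0"
    and GV: "adj X * X = V * mat_diag n (\<lambda>i. complex_of_real (d i)) * adj V"
    using psd_spectral[OF G] by blast
  note Vc = unitaryD[OF V]
  define D where "D = mat_diag n (\<lambda>i. complex_of_real (d i))"
  define t where "t i = (if d i > 0 then 1 / sqrt (d i) else 0)" for i
  define T where "T = mat_diag n (\<lambda>i. complex_of_real (t i))"
  define W where "W = X * V * T"
  have T: "T \<in> carrier_mat n n" "adj T = T" unfolding T_def by auto
  have W: "W \<in> carrier_mat n n" unfolding W_def using X Vc T by auto
  have adjW: "adj W = T * adj V * adj X"
    unfolding W_def using X Vc T by (simp add: adj_mult[of _ n n _ n] assoc_mult_mat_sq[of _ n] mult_carrier_mat_sq)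
  have VGV: "adj V * (adj X * X) * V = D" unfolding GV D_def using unitary_conj_cancel[OF V] by simp
  have td: "t i * d i = sqrt (d i)" "t i * (t i * d i * t i) = t i" if "i < n" for i
    using d that by (auto simp: t_def field_simps real_sqrt_mult[symmetric])
  have "adj W * X * V = T * (adj V * (adj X * X) * V)"
    unfolding adjW using X Vc T by (simp add: assoc_mult_mat_sq[of _ n] mult_carrier_mat_sq)
  also have "\<dots> = mat_diag n (\<lambda>i. complex_of_real (sqrt (d i)))"
    unfolding VGV T_def D_def using td by (intro eq_matI) (auto simp flip: of_real_mult)
  finally have "tr (adj W * X * V) = of_real (\<Sum>i<n. sqrt (d i))" by (simp add: tr_mat_diag)
  moreover have "trace_norm X = (\<Sum>i<n. sqrt (d i))"
    unfolding trace_norm_def GV msqrt_spectral[OF V d] tr_unitary_conj[OF V mat_diag_dim]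
    by (simp add: tr_mat_diag Re_sum)
  moreover have "W * (adj W * W) = W"
  proof -
    have "adj W * W = T * (adj V * (adj X * X) * V) * T"
      unfolding adjW unfolding W_def using X Vc T by (simp add: assoc_mult_mat_sq[of _ n] mult_carrier_mat_sq)
    then have "T * (adj W * W) = T"
      unfolding VGV T_def D_def using td by (simp add: assoc_mult_mat_sq[of _ n]) (intro eq_matI; auto simp flip: of_real_mult)
    then show ?thesis unfolding W_def using X Vc T by (simp add: assoc_mult_mat_sq[of _ n] mult_carrier_mat_sq)
  qed
  ultimately show ?thesis using that W V by simp
qed

text \<open>Cauchy--Schwarz for \<open>Y = R\<^sup>1\<^sup>/\<^sup>2 S\<^sub>1 W\<close> and \<open>Z = R\<^sup>1\<^sup>/\<^sup>2 S\<^sub>2 V\<close>.\<close>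

lemma cmod_tr_sandwich_le:
  assumes R: "psd n R" and S1: "S1 \<in> carrier_mat n n" "adj S1 = S1" and S2: "S2 \<in> carrier_mat n n" "adj S2 = S2"
    and W: "W \<in> carrier_mat n n" "W * (adj W * W) = W" and V: "unitary n V"
  shows "cmod (tr (adj W * (S1 * R * S2) * V))
    \<le> sqrt (Re (tr (R * (S1 * S1)))) * sqrt (Re (tr (R * (S2 * S2))))"
proof -
  note Vc = unitaryD[OF V]
  define a where "a = msqrt R"
  have a: "a \<in> carrier_mat n n" "adj a = a" "a * a = R"
    unfolding a_def using msqrt_carrier msqrt_hermitian msqrt_square R by auto
  have Rc: "R \<in> carrier_mat n n" using R psd_carrier by auto
  define Y where "Y = a * S1 * W"
  define Z where "Z = a * S2 * V"
  have Y: "Y \<in> carrier_mat n n" and Z: "Z \<in> carrier_mat n n" unfolding Y_def Z_def using a S1 S2 W Vc by auto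
  have adjY: "adj Y = adj W * S1 * a" and adjZ: "adj Z = adj V * S2 * a"
    unfolding Y_def Z_def using a S1 S2 W Vc
    by (simp_all add: adj_mult[of _ n n _ n] assoc_mult_mat_sq[of _ n] mult_carrier_mat_sq)
  have "adj Y * Z = adj W * (S1 * (a * a) * S2) * V"
    unfolding adjY Z_def using a(1) S1 S2 W Vc by (simp add: assoc_mult_mat_sq[of _ n] mult_carrier_mat_sq)
  from this[unfolded a(3), symmetric] have "cmod (tr (adj W * (S1 * R * S2) * V)) \<le> sqrt (Re (tr (adj Y * Y))) * sqrt (Re (tr (adj Z * Z)))"
    using tr_adj_mult_cauchy_schwarz[OF Y Z] by simp
  also have "\<dots> \<le> sqrt (Re (tr (S1 * R * S1))) * sqrt (Re (tr (S2 * R * S2)))"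
  proof (rule mult_mono)
    have "adj Y * Y = adj W * (S1 * (a * a) * S1) * W"
      unfolding adjY unfolding Y_def using a(1) S1 W by (simp add: assoc_mult_mat_sq[of _ n] mult_carrier_mat_sq)
    note this[unfolded a(3)]
    then show "sqrt (Re (tr (adj Y * Y))) \<le> sqrt (Re (tr (S1 * R * S1)))"
      using tr_partial_isometry_conj_le[OF _ W] psd_congruence[OF R S1(1)] S1(2) by simp
    have "adj Z * Z = adj V * (S2 * (a * a) * S2) * adj (adj V)"
      unfolding adjZ unfolding Z_def using a(1) S2 Vc by (simp add: assoc_mult_mat_sq[of _ n] mult_carrier_mat_sq)
    note this[unfolded a(3)]
    then show "sqrt (Re (tr (adj Z * Z))) \<le> sqrt (Re (tr (S2 * R * S2)))"
      using tr_unitary_conj[OF unitary_adj[OF V]] S2 Rc by simp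
  qed (use psd_tr_nonneg[OF psd_congruence[OF R S1(1)]] S1(2) psd_tr_nonneg[OF psd_gram[OF Z]] in auto)
  also have "\<dots> = sqrt (Re (tr (R * (S1 * S1)))) * sqrt (Re (tr (R * (S2 * S2))))"
    using S1 S2 Rc by (simp add: assoc_mult_mat_sq[of _ n] tr_mult_comm[of S1 n n] tr_mult_comm[of S2 n n])
  finally show ?thesis .
qed

lemma trace_norm_msqrt_mult_le_measurement:
  assumes \<rho>: "psd n \<rho>" and \<sigma>: "psd n \<sigma>" and P: "psd n P" and Q: "psd n (1\<^sub>m n - P)"
  shows "trace_norm (msqrt \<rho> * msqrt \<sigma>) \<le> sqrt (Re (tr (P * \<rho>)) * Re (tr (P * \<sigma>)))
            + sqrt (Re (tr ((1\<^sub>m n - P) * \<rho>)) * Re (tr ((1\<^sub>m n - P) * \<sigma>)))"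
proof -
  define s1 where "s1 = msqrt \<rho>"
  define s2 where "s2 = msqrt \<sigma>"
  have s1: "s1 \<in> carrier_mat n n" "adj s1 = s1" "s1 * s1 = \<rho>"
    unfolding s1_def using msqrt_carrier msqrt_hermitian msqrt_square \<rho> by auto
  have s2: "s2 \<in> carrier_mat n n" "adj s2 = s2" "s2 * s2 = \<sigma>"
    unfolding s2_def using msqrt_carrier msqrt_hermitian msqrt_square \<sigma> by auto
  have Pc: "P \<in> carrier_mat n n" using P psd_carrier by auto
  define Q where "Q = 1\<^sub>m n - P"
  have Qc: "Q \<in> carrier_mat n n" unfolding Q_def using Pc by auto
  obtain W V where W: "W \<in> carrier_mat n n" "W * (adj W * W) = W" and V: "unitary n V"
    and tn: "tr (adj W * (s1 * s2) * V) = of_real (trace_norm (s1 * s2))"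
    using trace_norm_polar[of "s1 * s2" n] s1 s2 by auto
  note Vc = unitaryD[OF V]
  have "s1 * Q = s1 - s1 * P" unfolding Q_def using s1 Pc by (subst mult_minus_distrib_mat[of _ n n]) auto
  then have "s1 * Q * s2 = s1 * s2 - s1 * P * s2" using s1 s2 Pc by (simp add: minus_mult_distrib_mat[of _ n n])
  then have split: "s1 * s2 = s1 * P * s2 + s1 * Q * s2" using s1 s2 Pc by (intro eq_matI) auto
  have N: "adj W * (s1 * P * s2) \<in> carrier_mat n n" "adj W * (s1 * Q * s2) \<in> carrier_mat n n"
    using W s1 s2 Pc Qc by auto
  have "adj W * (s1 * s2) = adj W * (s1 * P * s2) + adj W * (s1 * Q * s2)"
    unfolding split using s1 s2 Pc Qc by (intro mult_add_distrib_mat[OF adj_carrier[OF W(1)]]) auto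
  then have "adj W * (s1 * s2) * V = adj W * (s1 * P * s2) * V + adj W * (s1 * Q * s2) * V"
    using add_mult_distrib_mat[OF N Vc(1)] by simp
  then have "of_real (trace_norm (s1 * s2)) = tr (adj W * (s1 * P * s2) * V) + tr (adj W * (s1 * Q * s2) * V)"
    unfolding tn[symmetric] using N Vc by (simp add: tr_add[of _ n])
  from arg_cong[OF this, of Re]
  have "trace_norm (s1 * s2) = Re (tr (adj W * (s1 * P * s2) * V)) + Re (tr (adj W * (s1 * Q * s2) * V))"
    by simp
  also have "\<dots> \<le> cmod (tr (adj W * (s1 * P * s2) * V)) + cmod (tr (adj W * (s1 * Q * s2) * V))"
    by (intro add_mono complex_Re_le_cmod)
  also have "\<dots> \<le> sqrt (Re (tr (P * \<rho>))) * sqrt (Re (tr (P * \<sigma>))) + sqrt (Re (tr (Q * \<rho>))) * sqrt (Re (tr (Q * \<sigma>)))"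
    using cmod_tr_sandwich_le[OF P s1(1,2) s2(1,2) W V] cmod_tr_sandwich_le[OF Q[folded Q_def] s1(1,2) s2(1,2) W V]
    unfolding s1(3) s2(3) by (rule add_mono)
  finally show ?thesis unfolding s1_def s2_def Q_def by (simp add: real_sqrt_mult)
qed

section \<open>Fuchs--van de Graaf and the divergence bound\<close>

lemma binary_fuchs_van_de_graaf:
  fixes p q :: real
  assumes p: "0 \<le> p" "p \<le> 1" and q: "0 \<le> q" "q \<le> 1"
  shows "(p - q)\<^sup>2 \<le> 1 - (sqrt (p * q) + sqrt ((1 - p) * (1 - q)))\<^sup>2"
proof -
  define x y x' y' where "x = sqrt p" and "y = sqrt q" and "x' = sqrt (1 - p)" and "y' = sqrt (1 - q)"
  have sq: "x\<^sup>2 = p" "y\<^sup>2 = q" "x'\<^sup>2 = 1 - p" "y'\<^sup>2 = 1 - q"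
    unfolding x_def y_def x'_def y'_def using p q by auto
  have overlap: "sqrt (p * q) + sqrt ((1 - p) * (1 - q)) = x * y + x' * y'"
    unfolding x_def y_def x'_def y'_def by (simp add: real_sqrt_mult)
  have lagrange: "(x\<^sup>2 + x'\<^sup>2) * (y\<^sup>2 + y'\<^sup>2) = (x * y + x' * y')\<^sup>2 + (x * y' - x' * y)\<^sup>2"
    "(x\<^sup>2 + x'\<^sup>2) * (y\<^sup>2 + y'\<^sup>2) = (x * y' + x' * y)\<^sup>2 + (x * y - x' * y')\<^sup>2"
    by (simp_all add: power2_eq_square algebra_simps)
  have "p - q = (x * y' - x' * y) * (x * y' + x' * y)"
  proof -
    have "p - q = x\<^sup>2 * (y\<^sup>2 + y'\<^sup>2) - y\<^sup>2 * (x\<^sup>2 + x'\<^sup>2)" using sq by simp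
    then show ?thesis by (simp add: power2_eq_square algebra_simps)
  qed
  then have "(p - q)\<^sup>2 = (x * y' - x' * y)\<^sup>2 * (x * y' + x' * y)\<^sup>2" by (simp add: power_mult_distrib)
  also have "\<dots> \<le> (x * y' - x' * y)\<^sup>2"
  proof (rule mult_left_le)
    have "(x * y' + x' * y)\<^sup>2 + (x * y - x' * y')\<^sup>2 = 1" using lagrange(2) sq by simp
    then show "(x * y' + x' * y)\<^sup>2 \<le> 1" using zero_le_power2[of "x * y - x' * y'"] by linarith
  qed simp
  also have "\<dots> = 1 - (x * y + x' * y')\<^sup>2" using lagrange(1) sq by simp
  finally show ?thesis unfolding overlap .
qed

lemma tr_one_minus_mult:
  "P \<in> carrier_mat n n \<Longrightarrow> \<rho> \<in> carrier_mat n n \<Longrightarrow> tr ((1\<^sub>m n - P) * \<rho>) = tr \<rho> - tr (P * \<rho>)"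
  by (simp add: minus_mult_distrib_mat[of _ n n] tr_minus[of _ n])

lemma tr_test_diff_le_sqrt:
  assumes \<rho>: "psd n \<rho>" "tr \<rho> = 1" and \<sigma>: "psd n \<sigma>" "tr \<sigma> = 1"
    and P: "psd n P" "psd n (1\<^sub>m n - P)" and F: "fidelity \<sigma> \<rho> \<ge> 1 - \<epsilon>"
  shows "Re (tr (P * \<rho>)) - Re (tr (P * \<sigma>)) \<le> sqrt \<epsilon>"
proof -
  have Pc: "P \<in> carrier_mat n n" using P psd_carrier by auto
  define p q where "p = Re (tr (P * \<rho>))" and "q = Re (tr (P * \<sigma>))"
  have one_minus: "Re (tr ((1\<^sub>m n - P) * \<rho>)) = 1 - p" "Re (tr ((1\<^sub>m n - P) * \<sigma>)) = 1 - q"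
    unfolding p_def q_def using tr_one_minus_mult[OF Pc] \<rho> \<sigma> psd_carrier by auto
  have pq: "0 \<le> p" "p \<le> 1" "0 \<le> q" "q \<le> 1"
    using psd_tr_mult_nonneg[OF P(1) \<rho>(1)] psd_tr_mult_nonneg[OF P(1) \<sigma>(1)]
      psd_tr_mult_nonneg[OF P(2) \<rho>(1)] psd_tr_mult_nonneg[OF P(2) \<sigma>(1)] one_minus
    unfolding p_def q_def by auto
  define f where "f = trace_norm (msqrt \<sigma> * msqrt \<rho>)"
  have "0 \<le> f" unfolding f_def using msqrt_carrier \<rho> \<sigma> by (intro trace_norm_nonneg) auto
  moreover have "f \<le> sqrt (p * q) + sqrt ((1 - p) * (1 - q))"
    using trace_norm_msqrt_mult_le_measurement[OF \<sigma>(1) \<rho>(1) P] one_minus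
    unfolding f_def p_def q_def by (simp add: mult.commute)
  ultimately have "f\<^sup>2 \<le> (sqrt (p * q) + sqrt ((1 - p) * (1 - q)))\<^sup>2" by (intro power_mono)
  moreover have "f\<^sup>2 \<ge> 1 - \<epsilon>" using F unfolding fidelity_def f_def .
  ultimately have "(p - q)\<^sup>2 \<le> \<epsilon>" using binary_fuchs_van_de_graaf[OF pq] by linarith
  then have "\<bar>p - q\<bar> \<le> sqrt \<epsilon>" using real_sqrt_le_mono by fastforce
  then show ?thesis unfolding p_def q_def by linarith
qed

lemma tr_mult_loewner_mono:
  assumes "psd n P" "loewner_le n A B"
  shows "Re (tr (P * A)) \<le> Re (tr (P * B))"
proof -
  have A: "A \<in> carrier_mat n n" and B: "B \<in> carrier_mat n n" and "psd n (B - A)"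
    using assms(2) unfolding loewner_le_def by auto
  moreover have "P \<in> carrier_mat n n" using assms(1) psd_carrier by auto
  ultimately show ?thesis
    using psd_tr_mult_nonneg[OF assms(1)] by (force simp: mult_minus_distrib_mat[of _ n n] tr_minus[of _ n])
qed

lemma neglog2_tr_test_le:
  assumes e: "\<epsilon>1 + sqrt \<epsilon>2 < 1"
    and \<rho>: "psd n \<rho>" "tr \<rho> = 1" and \<rho>': "psd n \<rho>'" "tr \<rho>' = 1"
    and P: "psd n P" "loewner_le n P (1\<^sub>m n)" and acc: "Re (tr (P * \<rho>)) \<ge> 1 - \<epsilon>1"
    and F: "fidelity \<rho>' \<rho> \<ge> 1 - \<epsilon>2"
    and l: "loewner_le n \<rho>' (complex_of_real (2 powr l) \<cdot>\<^sub>m \<sigma>)"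
  shows "neglog2 (Re (tr (P * \<sigma>))) \<le> ereal (l + log 2 (1 / (1 - \<epsilon>1 - sqrt \<epsilon>2)))"
proof -
  define c where "c = 1 - \<epsilon>1 - sqrt \<epsilon>2"
  have c: "c > 0" unfolding c_def using e by simp
  have \<sigma>: "\<sigma> \<in> carrier_mat n n" using l unfolding loewner_le_def carrier_mat_def by auto
  have "psd n (1\<^sub>m n - P)" using P(2) unfolding loewner_le_def by auto
  then have "c \<le> Re (tr (P * \<rho>'))"
    using tr_test_diff_le_sqrt[OF \<rho> \<rho>' P(1) _ F] acc unfolding c_def by auto
  also have "\<dots> \<le> Re (tr (P * (complex_of_real (2 powr l) \<cdot>\<^sub>m \<sigma>)))"
    by (rule tr_mult_loewner_mono[OF P(1) l])
  also have "\<dots> = 2 powr l * Re (tr (P * \<sigma>))"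
    using \<sigma> psd_carrier[OF P(1)] by (simp add: mult_smult_distrib[of _ n n] tr_smult[of _ n])
  finally have "c / 2 powr l \<le> Re (tr (P * \<sigma>))" by (simp add: field_simps)
  moreover have "c / 2 powr l > 0" using c by simp
  ultimately have "log 2 (c / 2 powr l) \<le> log 2 (Re (tr (P * \<sigma>)))" "Re (tr (P * \<sigma>)) > 0"
    by (auto intro: log_mono)
  moreover have "log 2 (c / 2 powr l) = - (l + log 2 (1 / c))" using c by (simp add: log_divide)
  ultimately show ?thesis unfolding neglog2_def c_def by simp
qed

lemma DH_le_Dmax_add_log:
  assumes e: "\<epsilon>1 + sqrt \<epsilon>2 < 1"
    and \<rho>: "psd n \<rho>" "tr \<rho> = 1" and \<rho>': "psd n \<rho>'" "tr \<rho>' = 1"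
    and F: "fidelity \<rho>' \<rho> \<ge> 1 - \<epsilon>2"
  shows "DH \<epsilon>1 n \<rho> \<sigma> \<le> Dmax n \<rho>' \<sigma> + ereal (log 2 (1 / (1 - \<epsilon>1 - sqrt \<epsilon>2)))"
proof -
  let ?L = "log 2 (1 / (1 - \<epsilon>1 - sqrt \<epsilon>2))"
  have "DH \<epsilon>1 n \<rho> \<sigma> - ereal ?L \<le> Dmax n \<rho>' \<sigma>"
    unfolding Dmax_def
  proof (rule Inf_greatest, clarify)
    fix l assume l: "loewner_le n \<rho>' (complex_of_real (2 powr l) \<cdot>\<^sub>m \<sigma>)"
    have "DH \<epsilon>1 n \<rho> \<sigma> \<le> ereal (l + ?L)"
      unfolding DH_def using neglog2_tr_test_le[OF e \<rho> \<rho>' _ _ _ F l] by (auto intro!: Sup_least)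
    then show "DH \<epsilon>1 n \<rho> \<sigma> - ereal ?L \<le> ereal l" by (simp add: ereal_minus_le)
  qed
  then show ?thesis by (simp add: ereal_minus_le)
qed

section \<open>Channels\<close>

lemma sum_lessThan_mult:
  fixes f :: "nat \<Rightarrow> 'a::comm_monoid_add"
  shows "(\<Sum>r<k * d. f r) = (\<Sum>a<k. \<Sum>i<d. f (a * d + i))"
proof -
  have "(\<Sum>i<d. f (a * d + i)) = sum f {a * d..<a * d + d}" for a
    by (simp add: sum.atLeastLessThan_shift_0[of f "a * d"] add.commute atLeast0LessThan)
  then show ?thesis by (simp add: sum.nat_group)
qed

lemma pure_state_is_state:
  assumes "\<psi> \<in> pure_states k d"
  shows "psd (k * d) \<psi>" "tr \<psi> = 1"
proof -
  obtain v where v: "v \<in> carrier_vec (k * d)" "(\<Sum>i<k * d. (cmod (v $ i))\<^sup>2) = 1"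
    and \<psi>: "\<psi> = mat (k * d) (k * d) (\<lambda>(i,j). v $ i * cnj (v $ j))"
    using assms unfolding pure_states_def by blast
  have "tr \<psi> = (\<Sum>i<k * d. v $ i * cnj (v $ i))" unfolding \<psi> tr_def by simp
  also have "\<dots> = (\<Sum>i<k * d. complex_of_real ((cmod (v $ i))\<^sup>2))"
    by (intro sum.cong refl) (simp add: complex_mult_cnj cmod_power2)
  also have "\<dots> = complex_of_real (\<Sum>i<k * d. (cmod (v $ i))\<^sup>2)" by (rule of_real_sum[symmetric])
  finally show "tr \<psi> = 1" using v(2) by simp
  show "psd (k * d) \<psi>" unfolding psd_def Let_def
  proof (intro conjI ballI)
    fix x :: "complex vec"
    define z where "z = (\<Sum>i<k * d. cnj (x $ i) * v $ i)"
    have "(\<Sum>i<k * d. \<Sum>j<k * d. cnj (x $ i) * \<psi> $$ (i,j) * x $ j) = z * cnj z"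
      unfolding \<psi> z_def by (simp add: sum_product mult_ac)
    also have "\<dots> = complex_of_real ((cmod z)\<^sup>2)" by (simp add: complex_mult_cnj cmod_power2)
    finally show "Im (\<Sum>i<k * d. \<Sum>j<k * d. cnj (x $ i) * \<psi> $$ (i,j) * x $ j) = 0"
      "Re (\<Sum>i<k * d. \<Sum>j<k * d. cnj (x $ i) * \<psi> $$ (i,j) * x $ j) \<ge> 0" by simp_all
  qed (simp add: \<psi>)
qed

lemma tr_id_tensor:
  assumes E: "channel din dout E" and X: "X \<in> carrier_mat (k * din) (k * din)"
  shows "tr (id_tensor k din dout E X) = tr X"
proof -
  have Ea: "E (block din X a a) \<in> carrier_mat dout dout" "tr (E (block din X a a)) = tr (block din X a a)" for a
    using E unfolding channel_def block_def by auto
  have "tr (id_tensor k din dout E X)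
      = (\<Sum>a<k. \<Sum>i<dout. E (block din X ((a * dout + i) div dout) ((a * dout + i) div dout))
           $$ ((a * dout + i) mod dout, (a * dout + i) mod dout))"
    unfolding id_tensor_def tr_def by (simp add: sum_lessThan_mult)
  also have "\<dots> = (\<Sum>a<k. tr (E (block din X a a)))"
    using carrier_matD(1)[OF Ea(1)] by (intro sum.cong refl) (auto simp: tr_def)
  also have "\<dots> = (\<Sum>a<k. \<Sum>i<din. X $$ (a * din + i, a * din + i))"
    using Ea(2) by (simp add: tr_def block_def)
  also have "\<dots> = tr X" using X by (simp add: tr_def sum_lessThan_mult)
  finally show ?thesis .
qed

lemma channel_output_state:
  assumes "channel din dout E" "\<psi> \<in> pure_states k din"
  shows "psd (k * dout) (id_tensor k din dout E \<psi>)" "tr (id_tensor k din dout E \<psi>) = 1"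
  using assms pure_state_is_state[OF assms(2)] tr_id_tensor[OF assms(1) psd_carrier] unfolding channel_def by auto

lemma channel_fidelity_le:
  assumes "\<psi> \<in> pure_states k din"
  shows "channel_fidelity din dout E1 E2 \<le> fidelity (id_tensor k din dout E1 \<psi>) (id_tensor k din dout E2 \<psi>)"
  unfolding channel_fidelity_def
  by (rule cInf_lower) (use assms in \<open>auto simp: fidelity_def intro!: bdd_belowI[of _ 0]\<close>)

lemma ereal_Sup_le_Inf_add:
  assumes "\<And>x y. x \<in> A \<Longrightarrow> y \<in> B \<Longrightarrow> x \<le> y + ereal c"
  shows "Sup A \<le> Inf B + ereal c"
proof -
  have "Sup A - ereal c \<le> Inf B"
    using assms by (intro Inf_greatest) (simp add: ereal_minus_le Sup_least)
  then show ?thesis by (simp add: ereal_minus_le)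
qed

theorem lemma4:
  fixes \<epsilon>1 \<epsilon>2 :: real and din dout :: nat and E M :: "complex mat \<Rightarrow> complex mat"
  assumes "\<epsilon>1 \<ge> 0" and "\<epsilon>2 \<ge> 0" and "\<epsilon>1 + sqrt \<epsilon>2 < 1"
    and "channel din dout E" and "channel din dout M"
  shows "channel_DH \<epsilon>1 din dout E M
           \<le> channel_Dmax_smooth \<epsilon>2 din dout E M + ereal (log 2 (1 / (1 - \<epsilon>1 - sqrt \<epsilon>2)))"
  unfolding channel_DH_def channel_Dmax_smooth_def
proof (rule ereal_Sup_le_Inf_add, clarify)
  fix k \<psi> E' assume \<psi>: "\<psi> \<in> pure_states k din"
    and E': "channel din dout E'" "channel_fidelity din dout E' E \<ge> 1 - \<epsilon>2"
  let ?L = "ereal (log 2 (1 / (1 - \<epsilon>1 - sqrt \<epsilon>2)))"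
  let ?Dmax = "\<lambda>k \<psi>. Dmax (k * dout) (id_tensor k din dout E' \<psi>) (id_tensor k din dout M \<psi>)"
  have "DH \<epsilon>1 (k * dout) (id_tensor k din dout E \<psi>) (id_tensor k din dout M \<psi>) \<le> ?Dmax k \<psi> + ?L"
    using DH_le_Dmax_add_log[OF assms(3) channel_output_state[OF assms(4) \<psi>] channel_output_state[OF E'(1) \<psi>]]
      channel_fidelity_le[OF \<psi>, of dout E' E] E'(2) by simp
  also have "\<dots> \<le> Sup {?Dmax k \<psi> | k \<psi>. \<psi> \<in> pure_states k din} + ?L"
    using \<psi> by (intro add_right_mono Sup_upper) blast
  finally show "DH \<epsilon>1 (k * dout) (id_tensor k din dout E \<psi>) (id_tensor k din dout M \<psi>)
      \<le> Sup {?Dmax k \<psi> | k \<psi>. \<psi> \<in> pure_states k din} + ?L" .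
qed

end
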